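(* Let $W$ be a finite Weyl group with set $R$ of simple reflections, and for $r\in R$ let $\alpha_r$ be the corresponding simple root. Let $\tilde W=W\ltimes Z$ be the affine Weyl group. Suppose $a\in W_I$ for some $I\subseteq R$. If $(a,\mathbf u)\in\tilde W$ is an involution, with $\mathbf u=\sum_{r\in R}u_r\alpha_r$, then $a$ is an involution and $u_r=0$ whenever $r\notin I$. Moreover, let $J$ be the set of reflections $s\in R$ that commute with all $r\in I$. If $\mathbf v=\sum_{s\in J}v_s\alpha_s$, then $\mathbf v^b=\mathbf v$ for all $b\in W_I$.
   Context: $W$ has root system $\Phi$ in a Euclidean space $V$; $\alpha^\vee=2\alpha/\langle\alpha,\alpha\rangle$; $Z$ is the coroot lattice $L(\Phi^\vee)$ viewed as translations. $\tilde W$ consists of pairs $(a,\mathbf u)$, $a\in W$, $\mathbf u\in Z$, with multiplication $(a,\mathbf u)(b,\mathbf v)=(ab,\mathbf u^b+\mathbf v)$, where $\mathbf u\mapsto\mathbf u^b$ is the (right) linear action of $W$ on $V$, so that $\mathbf v^r=\mathbf v-\langle\mathbf v,\alpha_r\rangle\alpha_r^\vee$ for $r\in R$. $W_I$ is the standard parabolic subgroup generated by $I$. The coefficients $u_r,v_s$ are real numbers. *)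

theory Defs
  imports "HOL-Analysis.Analysis"
begin

(* V is modelled by a Euclidean space type 'a. *)

definition coroot :: "'a::euclidean_space \<Rightarrow> 'a" where
  "coroot \<alpha> = (2 / (\<alpha> \<bullet> \<alpha>)) *\<^sub>R \<alpha>"

definition refl :: "'a::euclidean_space \<Rightarrow> 'a \<Rightarrow> 'a" where
  "refl \<alpha> v = v - (v \<bullet> \<alpha>) *\<^sub>R coroot \<alpha>"

definition root_system :: "'a::euclidean_space set \<Rightarrow> bool" where
  "root_system \<Phi> \<longleftrightarrow> finite \<Phi> \<and> 0 \<notin> \<Phi>
     \<and> (\<forall>\<alpha>\<in>\<Phi>. \<forall>\<beta>\<in>\<Phi>. refl \<alpha> \<beta> \<in> \<Phi>)
     \<and> (\<forall>\<alpha>\<in>\<Phi>. \<forall>\<beta>\<in>\<Phi>. \<beta> \<bullet> coroot \<alpha> \<in> \<int>)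
     \<and> (\<forall>\<alpha>\<in>\<Phi>. \<forall>c. c *\<^sub>R \<alpha> \<in> \<Phi> \<longrightarrow> c = 1 \<or> c = -1)"

definition simple_system :: "'a::euclidean_space set \<Rightarrow> 'a set \<Rightarrow> bool" where
  "simple_system \<Phi> \<Delta> \<longleftrightarrow> \<Delta> \<subseteq> \<Phi> \<and> independent \<Delta>
     \<and> (\<forall>\<beta>\<in>\<Phi>. \<exists>c. \<beta> = (\<Sum>\<alpha>\<in>\<Delta>. c \<alpha> *\<^sub>R \<alpha>)
            \<and> ((\<forall>\<alpha>\<in>\<Delta>. c \<alpha> \<ge> (0::real)) \<or> (\<forall>\<alpha>\<in>\<Delta>. c \<alpha> \<le> 0)))"

(* With S = \<Delta> this is W; with S = I \<subseteq> \<Delta> it is the standard parabolic W_I.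
   (Simple reflections are involutions, so closure under composition suffices.) *)
inductive_set gen_group :: "'a::euclidean_space set \<Rightarrow> ('a \<Rightarrow> 'a) set" for S where
  gen_id: "id \<in> gen_group S"
| gen_step: "\<alpha> \<in> S \<Longrightarrow> w \<in> gen_group S \<Longrightarrow> (refl \<alpha> \<circ> w) \<in> gen_group S"

(* Product in W written so that the action u \<mapsto> u^a = a u is a right action:
   u^(ab) = (u^a)^b, i.e.  ab = b \<circ> a as maps. *)
definition wmult :: "('a \<Rightarrow> 'a) \<Rightarrow> ('a \<Rightarrow> 'a) \<Rightarrow> ('a \<Rightarrow> 'a)" where
  "wmult a b = b \<circ> a"

definition w_involution :: "('a \<Rightarrow> 'a) \<Rightarrow> bool" where
  "w_involution a \<longleftrightarrow> wmult a a = id \<and> a \<noteq> id"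

definition coroot_lattice :: "'a::euclidean_space set \<Rightarrow> 'a set" where
  "coroot_lattice \<Phi> = {u. \<exists>c::'a \<Rightarrow> int. u = (\<Sum>\<alpha>\<in>\<Phi>. of_int (c \<alpha>) *\<^sub>R coroot \<alpha>)}"

definition affine_weyl :: "'a::euclidean_space set \<Rightarrow> 'a set \<Rightarrow> (('a \<Rightarrow> 'a) \<times> 'a) set" where
  "affine_weyl \<Phi> \<Delta> = gen_group \<Delta> \<times> coroot_lattice \<Phi>"

definition aff_mult :: "(('a::euclidean_space \<Rightarrow> 'a) \<times> 'a) \<Rightarrow> (('a \<Rightarrow> 'a) \<times> 'a) \<Rightarrow> (('a \<Rightarrow> 'a) \<times> 'a)" where
  "aff_mult x y = (wmult (fst x) (fst y), fst y (snd x) + snd y)"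

definition aff_involution :: "(('a::euclidean_space \<Rightarrow> 'a) \<times> 'a) \<Rightarrow> bool" where
  "aff_involution x \<longleftrightarrow> aff_mult x x = (id, 0) \<and> x \<noteq> (id, 0)"

definition commuting_set :: "'a::euclidean_space set \<Rightarrow> 'a set \<Rightarrow> 'a set" where
  "commuting_set \<Delta> I = {s \<in> \<Delta> - I. \<forall>r\<in>I. refl s \<circ> refl r = refl r \<circ> refl s}"

end

theory Submission
  imports Defs
begin

(* Squaring (a, u) gives (a a, u^a + u), so u^a = -u.  Each simple reflection r moves a vector
   by a multiple of alpha_r, hence any b in W_I moves it by an element of span I; thus
   -2u = u^a - u lies in span I, and independence of the simple roots kills the coordinates u_r
   with r outside I.  Reflections in non-orthogonal roots commute only if the roots are
   proportional (apply both products to one of the roots), which distinct simple roots are not;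
   so J is orthogonal to I and W_I fixes every v in the span of J. *)

lemma linear_refl: "linear (refl \<alpha>)"
  by (rule linearI) (simp_all add: refl_def inner_add_left algebra_simps)

lemma refl_self [simp]: "refl \<alpha> \<alpha> = - \<alpha>"
proof (cases "\<alpha> = 0")
  case False
  then have "(\<alpha> \<bullet> \<alpha>) * (2 / (\<alpha> \<bullet> \<alpha>)) = 2" by simp
  then have "(\<alpha> \<bullet> \<alpha>) *\<^sub>R coroot \<alpha> = 2 *\<^sub>R \<alpha>" by (simp add: coroot_def)
  then show ?thesis by (simp add: refl_def scaleR_2)
qed (simp add: refl_def coroot_def)

lemma refl_commute_imp_parallel:
  fixes r s :: "'a::euclidean_space"
  assumes commute: "refl s \<circ> refl r = refl r \<circ> refl s" and nonorth: "s \<bullet> r \<noteq> 0"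
  shows "s \<in> span {r}"
proof -
  define k p q where "k = s \<bullet> r" and "p = 2 / (s \<bullet> s)" and "q = 2 / (r \<bullet> r)"
  have "p \<noteq> 0" using nonorth by (auto simp: p_def)
  have refl_s_r: "refl s r = r - (k * p) *\<^sub>R s"
    by (simp add: refl_def coroot_def k_def p_def inner_commute)
  have refl_r_s: "refl r s = s - (k * q) *\<^sub>R r"
    by (simp add: refl_def coroot_def k_def q_def)
  have "refl s (refl r r) = - r + (k * p) *\<^sub>R s"
    by (simp add: linear_neg[OF linear_refl] refl_s_r)
  moreover have "refl r (refl s r) = - r - (k * p) *\<^sub>R (s - (k * q) *\<^sub>R r)"
    by (simp add: refl_s_r refl_r_s linear_diff[OF linear_refl] linear_scale[OF linear_refl])
  moreover have "refl s (refl r r) = refl r (refl s r)"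
    using commute by (metis comp_apply)
  ultimately have "- r + (k * p) *\<^sub>R s = - r - (k * p) *\<^sub>R (s - (k * q) *\<^sub>R r)"
    by simp
  then have "(k * p) *\<^sub>R (2 *\<^sub>R s - (k * q) *\<^sub>R r) = 0"
    by (simp add: algebra_simps scaleR_2)
  then have "2 *\<^sub>R s = (k * q) *\<^sub>R r"
    using \<open>p \<noteq> 0\<close> nonorth by (simp add: k_def)
  then have "2 *\<^sub>R s \<in> span {r}"
    by (simp add: span_base span_mul)
  from span_mul[OF this, of "1/2"] show ?thesis
    by simp
qed

lemma independent_commuting_refl_orthogonal:
  fixes B :: "'a::euclidean_space set"
  assumes "independent B" "r \<in> B" "s \<in> B" "s \<noteq> r"
    and "refl s \<circ> refl r = refl r \<circ> refl s"
  shows "s \<bullet> r = 0"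
proof (rule ccontr)
  assume "s \<bullet> r \<noteq> 0"
  then have "s \<in> span {r}"
    using assms(5) by (rule refl_commute_imp_parallel[rotated])
  moreover have "span {r} \<subseteq> span (B - {s})"
    using assms(2,4) by (intro span_mono) auto
  ultimately have "dependent B"
    using assms(3) unfolding dependent_def by blast
  with assms(1) show False by simp
qed

lemma gen_group_displacement_in_span:
  "w \<in> gen_group S \<Longrightarrow> w v - v \<in> span S"
proof (induction w rule: gen_group.induct)
  case gen_id
  then show ?case by (simp add: span_zero)
next
  case (gen_step \<alpha> w)
  have "refl \<alpha> (w v) - w v \<in> span S"
    using gen_step(1) by (simp add: refl_def coroot_def span_mul span_base span_neg)
  from span_add[OF this gen_step.IH] show ?case by simp
qed

lemma gen_group_negated_in_span:
  assumes "w \<in> gen_group S" "w v = - v"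
  shows "v \<in> span S"
proof -
  have "(-2) *\<^sub>R v \<in> span S"
    using gen_group_displacement_in_span[OF assms(1), of v] assms(2) by (simp add: scaleR_2)
  from span_mul[OF this, of "-1/2"] show ?thesis by simp
qed

lemma gen_group_fixes_orthogonal:
  "w \<in> gen_group S \<Longrightarrow> (\<forall>r\<in>S. v \<bullet> r = 0) \<Longrightarrow> w v = v"
  by (induction w rule: gen_group.induct) (simp_all add: refl_def)

lemma aff_involutionD:
  assumes "aff_involution (a, u)"
  shows "w_involution a" and "a u = - u"
proof -
  have aa: "a \<circ> a = id" and au: "a u + u = 0" and ne: "(a, u) \<noteq> (id, 0)"
    using assms by (auto simp: aff_involution_def aff_mult_def wmult_def)
  then show "a u = - u" by (simp add: eq_neg_iff_add_eq_0)
  have "a \<noteq> id"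
  proof
    assume "a = id"
    then have "u = 0" using au by (simp flip: scaleR_2)
    with ne \<open>a = id\<close> show False by simp
  qed
  with aa show "w_involution a" by (simp add: w_involution_def wmult_def)
qed

lemma independent_coeff_outside_span_zero:
  fixes B :: "'a::euclidean_space set"
  assumes indep: "independent B" and "A \<subseteq> B"
    and in_span: "(\<Sum>b\<in>B. c b *\<^sub>R b) \<in> span A" and "b \<in> B - A"
  shows "c b = 0"
proof -
  have "finite B" using indep independent_bound by blast
  then have "finite A" using \<open>A \<subseteq> B\<close> finite_subset by blast
  then obtain d where d: "(\<Sum>b\<in>B. c b *\<^sub>R b) = (\<Sum>a\<in>A. d a *\<^sub>R a)"
    using in_span span_finite by auto
  define d' where "d' x = (if x \<in> A then d x else 0)" for x
  have "(\<Sum>a\<in>A. d a *\<^sub>R a) = (\<Sum>x\<in>B. d' x *\<^sub>R x)"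
    unfolding d'_def by (rule sum.mono_neutral_cong_left) (use \<open>finite B\<close> \<open>A \<subseteq> B\<close> in auto)
  with d have "(\<Sum>x\<in>B. (c x - d' x) *\<^sub>R x) = 0"
    by (simp add: scaleR_diff_left sum_subtractf)
  then have "c b - d' b = 0"
    using indep \<open>b \<in> B - A\<close> unfolding independent_explicit
    by (auto dest: spec[of _ "\<lambda>x. c x - d' x"])
  with \<open>b \<in> B - A\<close> show ?thesis by (simp add: d'_def)
qed

lemma commuting_set_orthogonal:
  assumes "independent \<Delta>" "I \<subseteq> \<Delta>" "s \<in> commuting_set \<Delta> I" "r \<in> I"
  shows "s \<bullet> r = 0"
  using assms by (intro independent_commuting_refl_orthogonal[of \<Delta>]) (auto simp: commuting_set_def)

theorem lemma2p8:
  fixes \<Phi> \<Delta> I :: "'a::euclidean_space set"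
    and a :: "'a \<Rightarrow> 'a" and u :: 'a and uc :: "'a \<Rightarrow> real"
  assumes "root_system \<Phi>" and "simple_system \<Phi> \<Delta>"
    and "I \<subseteq> \<Delta>" and "a \<in> gen_group I"
    and "(a, u) \<in> affine_weyl \<Phi> \<Delta>" and "aff_involution (a, u)"
    and "u = (\<Sum>r\<in>\<Delta>. uc r *\<^sub>R r)"
  shows "w_involution a \<and> (\<forall>r\<in>\<Delta> - I. uc r = 0)
    \<and> (\<forall>vc :: 'a \<Rightarrow> real. \<forall>b\<in>gen_group I.
          b (\<Sum>s\<in>commuting_set \<Delta> I. vc s *\<^sub>R s) = (\<Sum>s\<in>commuting_set \<Delta> I. vc s *\<^sub>R s))"
proof (intro conjI ballI allI)
  have indep: "independent \<Delta>"
    using assms(2) by (simp add: simple_system_def)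
  show "w_involution a"
    using aff_involutionD(1)[OF assms(6)] .
  have "u \<in> span I"
    using gen_group_negated_in_span[OF assms(4) aff_involutionD(2)[OF assms(6)]] .
  then show "uc r = 0" if "r \<in> \<Delta> - I" for r
    using independent_coeff_outside_span_zero[OF indep assms(3)] that assms(7) by blast
  show "b (\<Sum>s\<in>commuting_set \<Delta> I. vc s *\<^sub>R s) = (\<Sum>s\<in>commuting_set \<Delta> I. vc s *\<^sub>R s)"
    if "b \<in> gen_group I" for b vc
    using that by (rule gen_group_fixes_orthogonal)
      (simp add: inner_sum_left commuting_set_orthogonal[OF indep assms(3)])
qed

end
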